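(* Let $R$ be an associative ring with identity and involution $*$, and let $a\in R^{\#}\cap R^{\dagger}$. Then $a\in R^{SEP}$ if and only if there exists $x\in\rho_a=\{a,\ a^{\#},\ a^{\dagger},\ a^*,\ (a^{\dagger})^*,\ (a^{\#})^*,\ (a^{\#})^{\dagger},\ (a^{\dagger})^{\#}\}$ such that $a(a^{\#})^*a^{\dagger}$ and $a^{\dagger}a^2$ are left $x$-equivalent, i.e. $x\,a(a^{\#})^*a^{\dagger}=x\,a^{\dagger}a^2$.
   Context: An involution on $R$ is a map $x\mapsto x^*$ with $(x^* )^*=x$, $(x+y)^*=x^*+y^*$, $(xy)^*=y^*x^*$. An element $a$ is Moore–Penrose invertible if there is $b$ with $aba=a$, $bab=b$, $(ab)^*=ab$, $(ba)^*=ba$; such $b$ is unique, denoted $a^{\dagger}$, and $R^{\dagger}$ is the set of such $a$. An element $a$ is group invertible if there is $b$ with $aba=a$, $bab=b$, $ab=ba$; such $b$ is unique, denoted $a^{\#}$, and $R^{\#}$ is the set of such $a$. For $a\in R^{\#}\cap R^{\dagger}$, the elements $a^{\#}$ is Moore–Penrose invertible and $a^{\dagger}$ is group invertible, so $(a^{\#})^{\dagger}$ and $(a^{\dagger})^{\#}$ exist. For $a\in R^{\#}\cap R^{\dagger}$, $a$ is SEP if $a^*=a^{\dagger}=a^{\#}$; $R^{SEP}$ denotes the set of SEP elements. For $x,b,c\in R$, $b$ and $c$ are left $x$-equivalent if $xb=xc$. *)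

theory Defs
  imports Main
begin

definition involution :: "('a::ring_1 \<Rightarrow> 'a) \<Rightarrow> bool" where
  "involution s \<longleftrightarrow> (\<forall>x. s (s x) = x) \<and> (\<forall>x y. s (x + y) = s x + s y)
     \<and> (\<forall>x y. s (x * y) = s y * s x)"

definition is_mp_inverse :: "('a::ring_1 \<Rightarrow> 'a) \<Rightarrow> 'a \<Rightarrow> 'a \<Rightarrow> bool" where
  "is_mp_inverse s a b \<longleftrightarrow> a * b * a = a \<and> b * a * b = b \<and> s (a * b) = a * b \<and> s (b * a) = b * a"

definition mp_invertible :: "('a::ring_1 \<Rightarrow> 'a) \<Rightarrow> 'a \<Rightarrow> bool" where
  "mp_invertible s a \<longleftrightarrow> (\<exists>b. is_mp_inverse s a b)"

definition mp_inv :: "('a::ring_1 \<Rightarrow> 'a) \<Rightarrow> 'a \<Rightarrow> 'a" where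
  "mp_inv s a = (THE b. is_mp_inverse s a b)"

definition is_group_inverse :: "'a::ring_1 \<Rightarrow> 'a \<Rightarrow> bool" where
  "is_group_inverse a b \<longleftrightarrow> a * b * a = a \<and> b * a * b = b \<and> a * b = b * a"

definition group_invertible :: "'a::ring_1 \<Rightarrow> bool" where
  "group_invertible a \<longleftrightarrow> (\<exists>b. is_group_inverse a b)"

definition group_inv :: "'a::ring_1 \<Rightarrow> 'a" where
  "group_inv a = (THE b. is_group_inverse a b)"

definition SEP :: "('a::ring_1 \<Rightarrow> 'a) \<Rightarrow> 'a \<Rightarrow> bool" where
  "SEP s a \<longleftrightarrow> group_invertible a \<and> mp_invertible s a \<and>
     s a = mp_inv s a \<and> mp_inv s a = group_inv a"

definition left_equiv :: "'a::ring_1 \<Rightarrow> 'a \<Rightarrow> 'a \<Rightarrow> bool" where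
  "left_equiv x b c \<longleftrightarrow> x * b = x * c"

end

theory Submission
  imports Defs
begin

text \<open>Write \<open>m = a\<^sup>\<dagger>\<close>, \<open>g = a\<^sup>#\<close>, \<open>P = a (a\<^sup>#)\<^sup>* a\<^sup>\<dagger>\<close> and \<open>Q = a\<^sup>\<dagger> a\<^sup>2\<close>.
  Every \<open>x \<in> \<rho>\<^sub>a\<close> has a left multiple \<open>y x\<close> equal to \<open>a\<close> or to \<open>m\<close>, so \<open>x P = x Q\<close>
  implies \<open>a P = a Q\<close> or \<open>m P = m Q\<close>. Each of these forces \<open>a\<^sup>2 m = a\<close>, i.e. \<open>a\<close> is EP
  and \<open>m = g\<close>; for \<open>m P = m Q\<close> this goes through \<open>(a\<^sup>#)\<^sup>* m = m\<^sup>2 a\<^sup>2 = m\<^sup>2 a\<^sup>3 m\<close> and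
  cancelling \<open>m\<close> once, which is possible because \<open>a\<^sup>\<dagger>\<close> is group invertible. When \<open>m = g\<close>,
  the equation \<open>m P = m Q\<close> reads \<open>m\<^sup>* m = m a\<close>, and then \<open>m = a\<^sup>* m\<^sup>* m = a\<^sup>* a m = a\<^sup>*\<close>.\<close>

lemma involutionD:
  assumes "involution s"
  shows "s (s x) = x" and "s (x * y) = s y * s x"
  using assms unfolding involution_def by auto

lemma is_mp_inverse_unique:
  assumes "involution s" and b: "is_mp_inverse s a b" and c: "is_mp_inverse s a c"
  shows "b = c"
proof -
  note star = involutionD[OF \<open>involution s\<close>]
  from b c have "b = b * s b * s (a * c * a)"
    unfolding is_mp_inverse_def by (metis star(2) mult.assoc)
  also have "\<dots> = b * a * c"
    using b c unfolding is_mp_inverse_def by (metis star(2) mult.assoc)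
  also have "\<dots> = s (a * c * a) * s c * c"
    using b c unfolding is_mp_inverse_def by (metis star(2) mult.assoc)
  also have "\<dots> = c"
    using c unfolding is_mp_inverse_def by (metis star(2))
  finally show ?thesis .
qed

lemma mp_inv_eqI:
  assumes "involution s" and "is_mp_inverse s a b"
  shows "mp_inv s a = b"
  unfolding mp_inv_def using assms is_mp_inverse_unique by blast

lemma is_mp_inverse_mp_inv:
  assumes "involution s" and "mp_invertible s a"
  shows "is_mp_inverse s a (mp_inv s a)"
  using assms mp_inv_eqI unfolding mp_invertible_def by metis

lemma is_group_inverse_unique:
  assumes b: "is_group_inverse a b" and c: "is_group_inverse a c"
  shows "b = c"
proof -
  from b c have "a * b = a * c"
    unfolding is_group_inverse_def by (metis mult.assoc)
  with b c show ?thesis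
    unfolding is_group_inverse_def by (metis mult.assoc)
qed

lemma group_inv_eqI:
  assumes "is_group_inverse a b"
  shows "group_inv a = b"
  unfolding group_inv_def using assms is_group_inverse_unique by blast

lemma is_group_inverse_group_inv:
  assumes "group_invertible a"
  shows "is_group_inverse a (group_inv a)"
  using assms group_inv_eqI unfolding group_invertible_def by metis

lemma group_inverse_absorb:
  assumes "is_group_inverse a g"
  shows "g * a * a = a" "a * a * g = a" "g * g * a = g" "a * g * g = g"
  using assms unfolding is_group_inverse_def by (metis mult.assoc)+

lemma group_inverse_left_cancel:
  assumes "is_group_inverse b k" and "b * b * u = b * b * v"
  shows "b * u = b * v"
proof -
  have "b * u = k * (b * b * u)" and "b * v = k * (b * b * v)"
    using group_inverse_absorb(1)[OF assms(1)] by (metis mult.assoc)+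
  with assms(2) show ?thesis by simp
qed

lemma left_equiv_mult_left:
  assumes "left_equiv x b c"
  shows "left_equiv (y * x) b c"
  using assms unfolding left_equiv_def by (simp add: mult.assoc)

locale mp_and_group_inverse =
  fixes s :: "'a::ring_1 \<Rightarrow> 'a" and a m g :: 'a
  assumes involution: "involution s"
    and mp_inverse: "is_mp_inverse s a m"
    and group_inverse: "is_group_inverse a g"
begin

lemmas star_star [simp] = involutionD(1)[OF involution]
   and star_mult = involutionD(2)[OF involution]

lemma mp_eqs: "a * m * a = a" "m * a * m = m" "s (a * m) = a * m" "s (m * a) = m * a"
  using mp_inverse unfolding is_mp_inverse_def by auto

lemma group_eqs: "a * g * a = a" "g * a * g = g" "a * g = g * a"
  using group_inverse unfolding is_group_inverse_def by auto

lemmas group_absorb = group_inverse_absorb[OF group_inverse]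

lemma mp_star_absorb: "m * s m * s a = m" "s a * s m * m = m" "s a * a * m = s a"
  using mp_eqs star_mult by (metis mult.assoc)+

lemma group_mp_absorb: "g * m * a = g" "a * m * g = g"
  using group_absorb(3,4) mp_eqs(1) by (metis mult.assoc)+

lemma mp_inverse_group_inverse: "is_mp_inverse s g (m * a * a * a * m)"
proof -
  have "g * (m * a * a * a * m) = a * m"
    using group_mp_absorb(1) group_absorb(1) by (metis mult.assoc)
  moreover have "m * a * a * a * m * g = m * a"
    using group_mp_absorb(2) group_absorb(2) by (metis mult.assoc)
  ultimately show ?thesis
    unfolding is_mp_inverse_def using mp_eqs group_mp_absorb(2) by (metis mult.assoc)
qed

lemma star_group_projection:
  "s (a * g) * s (a * g) = s (a * g)" "s a * s (a * g) = s a" "s (a * g) * s a = s a"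
  using group_eqs(1) group_absorb(2) star_mult by (metis mult.assoc)+

lemma group_inverse_mp_inverse: "is_group_inverse m (s (a * g) * a * s (a * g))"
proof -
  define f where "f = s (a * g)"
  have mf: "m * f = m" and fm: "f * m = m"
    unfolding f_def using mp_star_absorb(1,2) star_group_projection(2,3) by (metis mult.assoc)+
  have "m * a * f = s (a * g * (m * a))"
    unfolding f_def using mp_eqs(4) by (simp add: star_mult)
  also have "a * g * (m * a) = a * g"
    using group_eqs(3) mp_eqs(1) by (metis mult.assoc)
  finally have maf: "m * a * f = f" unfolding f_def .
  have "f * a * m = s (a * m * (a * g))"
    unfolding f_def using mp_eqs(3) by (simp add: star_mult mult.assoc)
  also have "a * m * (a * g) = a * g"
    using mp_eqs(1) by (metis mult.assoc)
  finally have fam: "f * a * m = f" unfolding f_def .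
  have mk: "m * (f * a * f) = f" using mf maf by (metis mult.assoc)
  have km: "f * a * f * m = f" using fm fam by (metis mult.assoc)
  have "f * (f * a * f) = f * a * f"
    using star_group_projection(1) unfolding f_def by (metis mult.assoc)
  with mk km fm show ?thesis
    unfolding is_group_inverse_def f_def[symmetric] by (simp add: mult.assoc)
qed

lemma left_equiv_a_or_m:
  assumes "x \<in> {a, g, m, s a, s m, s g, mp_inv s g, group_inv m}" and "left_equiv x b c"
  shows "left_equiv a b c \<or> left_equiv m b c"
proof -
  have h: "mp_inv s g = m * a * a * a * m"
    by (rule mp_inv_eqI[OF involution mp_inverse_group_inverse])
  have k: "group_inv m = s (a * g) * a * s (a * g)"
    by (rule group_inv_eqI[OF group_inverse_mp_inverse])
  have "1 * a = a" "1 * m = m" "a * a * g = a" "m * s m * s a = m"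
    using group_absorb(2) mp_star_absorb(1) by simp_all
  moreover have "a * s a * s m = a"
    using mp_eqs(1,4) star_mult[of m a] by (metis mult.assoc)
  moreover have "m * s m * s a * s a * s g = m"
  proof -
    have "s a * s a * s g = s a"
      using group_absorb(1) star_mult by (metis mult.assoc)
    with mp_star_absorb(1) show ?thesis by (metis mult.assoc)
  qed
  moreover have "m * g * mp_inv s g = m"
    unfolding h using group_mp_absorb(1) group_absorb(1) mp_eqs(2) by (metis mult.assoc)
  moreover have "m * m * group_inv m = m"
    unfolding k using group_inverse_absorb(2)[OF group_inverse_mp_inverse] .
  ultimately have "\<exists>y. y * x = a \<or> y * x = m"
    using assms(1) by (elim insertE emptyE) blast+
  then show ?thesis
    using assms(2) left_equiv_mult_left by metis
qed

lemma sq_mp_eq_of_left_equiv_a: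
  assumes "left_equiv a (a * s g * m) (m * a^2)"
  shows "a * a * m = a"
proof -
  have "a * a * s g * m = a * a"
    using assms mp_eqs(1) unfolding left_equiv_def power2_eq_square by (metis mult.assoc)
  then have "g * a * a * s g * m = g * a * a"
    by (metis mult.assoc)
  then have a_sg_m: "a * s g * m = a"
    using group_absorb(1) by simp
  have "a = a * s g * m * a * m"
    using a_sg_m mp_eqs(2) by (metis mult.assoc)
  with a_sg_m show ?thesis by simp
qed

lemma mp_mult_star_group_inv: "m * a * s g = s g"
proof -
  have "s g = s (m * a) * s g"
    using group_mp_absorb(1) star_mult by (metis mult.assoc)
  with mp_eqs(4) show ?thesis by simp
qed

lemma sq_mp_eq_of_left_equiv_m:
  assumes "left_equiv m (a * s g * m) (m * a^2)"
  shows "a * a * m = a"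
proof -
  have "s g * m = m * m * (a * a)"
    using assms mp_mult_star_group_inv unfolding left_equiv_def power2_eq_square
    by (metis mult.assoc)
  then have "m * m * (a * a) = m * m * (a * a * a * m)"
    using mp_eqs(2) by (metis mult.assoc)
  then have "m * (a * a) = m * (a * a * a * m)"
    by (rule group_inverse_left_cancel[OF group_inverse_mp_inverse])
  then have "a * m * (a * a) = a * m * (a * a * a * m)"
    by (metis mult.assoc)
  then have "a * a = a * a * a * m"
    using mp_eqs(1) by (metis mult.assoc)
  then have "g * a * a = g * a * a * a * m"
    by (metis mult.assoc)
  then show ?thesis
    using group_absorb(1) by simp
qed

lemma mp_eq_group_inv_of_sq_mp_eq:
  assumes "a * a * m = a"
  shows "m = g"
proof -
  have ga: "g * a = a * m"
    using assms group_absorb(1) by (metis mult.assoc)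
  have "m * a = m * a * (g * a)"
    using group_eqs(1) by (metis mult.assoc)
  then have "m * a = s (g * a) * (m * a)"
    using mp_eqs(4) star_mult by metis
  also have "\<dots> = g * a"
    using ga mp_eqs(1,3) by (metis mult.assoc)
  finally have "m * a = g * a" .
  then have "m = g * a * m"
    using mp_eqs(2) by metis
  also have "\<dots> = g"
    using ga group_absorb(3) by (metis mult.assoc)
  finally show ?thesis .
qed

lemma star_eq_mp_of_left_equiv_m:
  assumes "m = g" and "left_equiv m (a * s g * m) (m * a^2)"
  shows "s a = m"
proof -
  have "s m * m = m * m * (a * a)"
    using assms mp_mult_star_group_inv unfolding left_equiv_def power2_eq_square
    by (metis mult.assoc)
  also have "\<dots> = m * a"
    using assms(1) group_absorb(3) by (metis mult.assoc)
  finally have sm_m: "s m * m = m * a" .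
  have "m = s a * s m * m"
    using mp_star_absorb(2) by simp
  also have "\<dots> = s a * a * m"
    using sm_m assms(1) group_eqs(3) by (metis mult.assoc)
  also have "\<dots> = s a"
    using mp_star_absorb(3) .
  finally show ?thesis by simp
qed

theorem sep_iff_left_equiv:
  "s a = m \<and> m = g \<longleftrightarrow>
    (\<exists>x\<in>{a, g, m, s a, s m, s g, mp_inv s g, group_inv m}.
      left_equiv x (a * s g * m) (m * a^2))"
proof
  assume sep: "s a = m \<and> m = g"
  then have "s g = a" by auto
  with sep have "a * s g * m = m * a^2"
    using group_absorb(1,2) unfolding power2_eq_square by (metis mult.assoc)
  then show "\<exists>x\<in>{a, g, m, s a, s m, s g, mp_inv s g, group_inv m}.
      left_equiv x (a * s g * m) (m * a^2)"
    unfolding left_equiv_def by auto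
next
  assume "\<exists>x\<in>{a, g, m, s a, s m, s g, mp_inv s g, group_inv m}.
      left_equiv x (a * s g * m) (m * a^2)"
  then have "left_equiv a (a * s g * m) (m * a^2) \<or> left_equiv m (a * s g * m) (m * a^2)"
    using left_equiv_a_or_m by blast
  then have "m = g \<and> left_equiv m (a * s g * m) (m * a^2)"
  proof
    assume a_case: "left_equiv a (a * s g * m) (m * a^2)"
    then have "m = g"
      by (intro mp_eq_group_inv_of_sq_mp_eq sq_mp_eq_of_left_equiv_a)
    moreover have "left_equiv g (a * s g * m) (m * a^2)"
      using left_equiv_mult_left[OF a_case, of "g * g"] group_absorb(3) by simp
    ultimately show ?thesis by simp
  next
    assume "left_equiv m (a * s g * m) (m * a^2)"
    then show ?thesis
      using mp_eq_group_inv_of_sq_mp_eq sq_mp_eq_of_left_equiv_m by blast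
  qed
  then show "s a = m \<and> m = g"
    using star_eq_mp_of_left_equiv_m by blast
qed

end

theorem theorem5p2:
  fixes s :: "'a::ring_1 \<Rightarrow> 'a" and a :: 'a
  assumes "involution s"
    and "group_invertible a" and "mp_invertible s a"
  shows "SEP s a \<longleftrightarrow>
    (\<exists>x\<in>{a, group_inv a, mp_inv s a, s a, s (mp_inv s a), s (group_inv a),
           mp_inv s (group_inv a), group_inv (mp_inv s a)}.
       left_equiv x (a * s (group_inv a) * mp_inv s a) (mp_inv s a * a ^ 2))"
proof -
  interpret mp_and_group_inverse s a "mp_inv s a" "group_inv a"
    using assms is_mp_inverse_mp_inv is_group_inverse_group_inv by unfold_locales
  show ?thesis
    unfolding SEP_def using assms sep_iff_left_equiv by simp
qed

end
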